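(* Let $N>4$ and $V\in C(\mathbb{R}^N,\mathbb{R})\cap L^\infty(\mathbb{R}^N,\mathbb{R})\cap L^s(\mathbb{R}^N,\mathbb{R})$ for some $1<s<N/2$. Then $$\lim_{\mu+|\xi|\to+\infty}\int_{\mathbb{R}^N}V(x)|z_{\mu,\xi}(x)|^2dx=0,$$ where the limit is over $\mu>0$, $\xi\in\mathbb{R}^N$.
   Context: $\kappa_N=(N(N-2))^{(N-2)/4}$ and $z_{\mu,\xi}(x)=\kappa_N\mu^{(N-2)/2}(\mu^2+|x-\xi|^2)^{-(N-2)/2}$ for $\mu>0$, $\xi\in\mathbb{R}^N$. *)

theory Defs
  imports "HOL-Analysis.Analysis"
begin

text \<open>Dimension N of the ambient Euclidean space 'a is DIM('a).\<close>

definition kappaN :: "nat \<Rightarrow> real" where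
  "kappaN N = (real N * (real N - 2)) powr ((real N - 2) / 4)"

definition bubble :: "real \<Rightarrow> 'a::euclidean_space \<Rightarrow> 'a \<Rightarrow> real" where
  "bubble \<mu> \<xi> x = kappaN DIM('a) * \<mu> powr ((real DIM('a) - 2) / 2)
      * (\<mu>\<^sup>2 + (norm (x - \<xi>))\<^sup>2) powr (- (real DIM('a) - 2) / 2)"

end

theory Submission
  imports Defs "HOL-Probability.Sinc_Integral"
begin

(* Young's inequality with the conjugate exponents N/2 and
   N/(N-2) gives |V| z^2 <= t^(N/2) |V|^(N/2) + t^(-N/(N-2)) z^(2N/(N-2)) for every t > 0. The integral of
   z^(2N/(N-2)) does not depend on mu and xi (translation and scaling), so the second term is small for t
   large. V lies in L^(N/2) because |V|^(N/2) <= M^(N/2-s) |V|^s, so the first term is small outside a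
   large ball B. On B the bubble is uniformly small once mu + |xi| is large, since
   z(x) <= kappa_N ((mu + |x - xi|)/2)^(-(N-2)/2), and there |V| <= M suffices. *)

lemma power2_powr:
  fixes x :: real
  assumes "x \<ge> 0"
  shows "(x\<^sup>2) powr a = x powr (2 * a)"
proof (cases "x = 0")
  case False
  then have "x\<^sup>2 = x powr 2"
    using assms by (simp add: powr_numeral)
  then show ?thesis
    by (simp add: powr_powr)
qed simp

lemma Youngs_inequality_scaled:
  fixes a b t p q :: real
  assumes "a \<ge> 0" and "b \<ge> 0" and "t > 0" and "p > 1" and "q > 1" and "1 / p + 1 / q = 1"
  shows "a * b \<le> t powr p * a powr p + t powr (- q) * b powr q"
proof -
  have "a * b = (t * a) * (b / t)"
    using assms(3) by simp
  also have "\<dots> \<le> (t * a) powr p / p + (b / t) powr q / q"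
    using assms by (intro Youngs_inequality) auto
  also have "\<dots> \<le> (t * a) powr p + (b / t) powr q"
    using assms(4,5) by (intro add_mono) (simp_all add: divide_le_eq mult_le_cancel_left1)
  also have "\<dots> = t powr p * a powr p + t powr (- q) * b powr q"
    using assms(1-3) by (simp add: powr_mult powr_divide powr_minus_divide)
  finally show ?thesis .
qed

lemma nn_integral_lborel_affine:
  fixes f :: "'a::euclidean_space \<Rightarrow> ennreal" and t :: 'a
  assumes [measurable]: "f \<in> borel_measurable borel" and "c > 0"
  shows "(\<integral>\<^sup>+x. f x \<partial>lborel) = ennreal (c ^ DIM('a)) * (\<integral>\<^sup>+y. f (t + c *\<^sub>R y) \<partial>lborel)"
  using \<open>c > 0\<close> by (subst lborel_affine[of c t])
    (simp_all add: nn_integral_density nn_integral_distr nn_integral_cmult)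

lemma nn_integral_inverse_one_plus_norm_sq_power_finite:
  "(\<integral>\<^sup>+(y::'a::euclidean_space). ennreal (inverse ((1 + (norm y)\<^sup>2) ^ DIM('a))) \<partial>lborel) < \<infinity>"
proof -
  have "integrable lborel (\<lambda>t::real. inverse (1 + t\<^sup>2))"
    using integrable_inverse_1_plus_square by (simp add: einterval_def set_integrable_def)
  then have finite_1d: "(\<integral>\<^sup>+(t::real). ennreal (inverse (1 + t\<^sup>2)) \<partial>lborel) < \<infinity>"
    by (simp add: integrable_iff_bounded)
  have "inverse ((1 + (norm y)\<^sup>2) ^ DIM('a)) \<le> (\<Prod>b\<in>Basis. inverse (1 + (y \<bullet> b)\<^sup>2))" for y :: 'a
  proof -
    have "inverse ((1 + (norm y)\<^sup>2) ^ DIM('a)) = (\<Prod>b\<in>(Basis::'a set). inverse (1 + (norm y)\<^sup>2))"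
      by (simp add: power_inverse)
    also have "\<dots> \<le> (\<Prod>b\<in>Basis. inverse (1 + (y \<bullet> b)\<^sup>2))"
    proof (intro prod_mono conjI)
      fix b :: 'a assume "b \<in> Basis"
      then have "(y \<bullet> b)\<^sup>2 \<le> (norm y)\<^sup>2"
        using Basis_le_norm by (metis abs_ge_zero power2_abs power_mono)
      then show "inverse (1 + (norm y)\<^sup>2) \<le> inverse (1 + (y \<bullet> b)\<^sup>2)"
        by (intro le_imp_inverse_le) (auto simp: add_pos_nonneg)
    qed (simp add: add_pos_nonneg)
    finally show ?thesis .
  qed
  then have "(\<integral>\<^sup>+(y::'a). ennreal (inverse ((1 + (norm y)\<^sup>2) ^ DIM('a))) \<partial>lborel)
      \<le> (\<integral>\<^sup>+(y::'a). (\<Prod>b\<in>Basis. ennreal (inverse (1 + (y \<bullet> b)\<^sup>2))) \<partial>lborel)"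
    by (intro nn_integral_mono) (simp add: prod_ennreal ennreal_leI)
  also have "\<dots> = (\<Prod>b\<in>(Basis::'a set). \<integral>\<^sup>+t. ennreal (inverse (1 + t\<^sup>2)) \<partial>lborel)"
    by (rule nn_integral_lborel_prod) auto
  also have "\<dots> < \<infinity>"
    using finite_1d by (simp add: power_less_top_ennreal)
  finally show ?thesis .
qed

lemma nn_integral_outside_cball_tendsto_zero:
  fixes f :: "'a::real_normed_vector \<Rightarrow> ennreal"
  assumes "f \<in> borel_measurable borel" and "sets M = sets borel"
    and "(\<integral>\<^sup>+x. f x \<partial>M) < \<infinity>"
  shows "(\<lambda>i. \<integral>\<^sup>+x. f x * indicator (- cball 0 (real i)) x \<partial>M) \<longlonglongrightarrow> 0"
proof -
  let ?f = "\<lambda>i x. f x * indicator (- cball 0 (real i)) x"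
  have "f \<in> borel_measurable M"
    by (subst measurable_cong_sets[OF assms(2) refl]) (rule assms(1))
  then have measurable: "?f i \<in> borel_measurable M" for i
    using assms(2) by (intro borel_measurable_times_ennreal borel_measurable_indicator) auto
  have "decseq ?f"
    by (intro decseq_SucI le_funI) (simp split: split_indicator)
  have "(\<integral>\<^sup>+x. ?f 0 x \<partial>M) < \<infinity>"
    using assms(3) by (elim le_less_trans[rotated], intro nn_integral_mono) (simp split: split_indicator)
  then have "(\<integral>\<^sup>+x. (INF i. ?f i x) \<partial>M) = (INF i. \<integral>\<^sup>+x. ?f i x \<partial>M)"
    using \<open>decseq ?f\<close> measurable by (rule nn_integral_monotone_convergence_INF_decseq[rotated 2])
  moreover have "(INF i. ?f i x) = 0" for x
  proof -
    obtain i :: nat where "norm x \<le> real i"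
      using real_arch_simple by blast
    have "(INF i. ?f i x) \<le> ?f i x"
      by (rule INF_lower) simp
    also have "?f i x = 0"
      using \<open>norm x \<le> real i\<close> by simp
    finally show ?thesis
      by simp
  qed
  ultimately have "(INF i. \<integral>\<^sup>+x. ?f i x \<partial>M) = 0"
    by simp
  moreover have "decseq (\<lambda>i. \<integral>\<^sup>+x. ?f i x \<partial>M)"
    by (intro decseq_SucI nn_integral_mono) (simp split: split_indicator)
  ultimately show ?thesis
    using LIMSEQ_INF by fastforce
qed

lemma abs_integral_le_nn_integral_abs:
  fixes f :: "'a \<Rightarrow> real"
  shows "ennreal \<bar>integral\<^sup>L M f\<bar> \<le> (\<integral>\<^sup>+x. ennreal \<bar>f x\<bar> \<partial>M)"
proof (cases "integrable M f")
  case True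
  then show ?thesis
    using integral_norm_bound_ennreal[OF True] by simp
qed (simp add: not_integrable_integral_eq)

lemma integrable_abs_powr_of_bounded:
  fixes f :: "'a \<Rightarrow> real"
  assumes "integrable M (\<lambda>x. \<bar>f x\<bar> powr s)" and "f \<in> borel_measurable M"
    and "\<And>x. \<bar>f x\<bar> \<le> C" and "0 < s" and "s \<le> p"
  shows "integrable M (\<lambda>x. \<bar>f x\<bar> powr p)"
proof (rule Bochner_Integration.integrable_bound)
  show "integrable M (\<lambda>x. C powr (p - s) * \<bar>f x\<bar> powr s)"
    using assms(1) by simp
  show "(\<lambda>x. \<bar>f x\<bar> powr p) \<in> borel_measurable M"
    using assms(2) by measurable
  show "AE x in M. norm (\<bar>f x\<bar> powr p) \<le> norm (C powr (p - s) * \<bar>f x\<bar> powr s)"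
  proof (intro AE_I2)
    fix x
    have "\<bar>f x\<bar> powr p = \<bar>f x\<bar> powr (p - s) * \<bar>f x\<bar> powr s"
      using assms(4,5) by (cases "f x = 0") (auto simp: powr_add[symmetric])
    also have "\<dots> \<le> C powr (p - s) * \<bar>f x\<bar> powr s"
      using assms(3,5) by (intro mult_right_mono powr_mono2) auto
    finally show "norm (\<bar>f x\<bar> powr p) \<le> norm (C powr (p - s) * \<bar>f x\<bar> powr s)"
      by simp
  qed
qed

lemma eventually_mult_less_of_tendsto_zero:
  fixes f :: "'b \<Rightarrow> ennreal"
  assumes "(f \<longlongrightarrow> 0) F" and "c < \<infinity>" and "e > 0"
  shows "\<forall>\<^sub>F x in F. c * f x < e"
proof -
  have "c < top"
    using assms(2) by simp
  from order_tendstoD(2)[OF ennreal_tendsto_cmult[OF this assms(1)]] show ?thesis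
    using assms(3) by simp
qed

lemma ex_pos_mult_ennreal_powr_less:
  fixes c e :: ennreal and a b :: real
  assumes "b > 0" and "c < \<infinity>" and "e > 0"
  shows "\<exists>x>0. c * ennreal (a * x powr (- b)) < e"
proof -
  have "((\<lambda>x. a * x powr (- b)) \<longlongrightarrow> 0) at_top"
    using assms(1) by (intro tendsto_mult_right_zero tendsto_neg_powr filterlim_ident) simp
  from tendsto_ennrealI[OF this] have "((\<lambda>x. ennreal (a * x powr (- b))) \<longlongrightarrow> 0) at_top"
    by simp
  then have "\<forall>\<^sub>F x in at_top. 0 < x \<and> c * ennreal (a * x powr (- b)) < e"
    using assms(2,3) by (intro eventually_conj eventually_gt_at_top eventually_mult_less_of_tendsto_zero)
  then show ?thesis
    using eventually_happens'[OF trivial_limit_at_top_linorder] by blast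
qed

lemma bubble_nonneg: "0 \<le> bubble \<mu> \<xi> x"
  by (simp add: bubble_def kappaN_def)

lemma bubble_measurable [measurable]: "bubble \<mu> \<xi> \<in> borel_measurable borel"
  unfolding bubble_def by measurable

lemma bubble_eq:
  fixes \<xi> x :: "'a::euclidean_space"
  defines "k \<equiv> (real DIM('a) - 2) / 2"
  shows "bubble \<mu> \<xi> x = kappaN DIM('a) * \<mu> powr k * (\<mu>\<^sup>2 + (norm (x - \<xi>))\<^sup>2) powr (- k)"
  by (simp add: bubble_def k_def minus_divide_left)

lemma bubble_rescale:
  fixes \<xi> y :: "'a::euclidean_space"
  assumes "\<mu> > 0"
  shows "bubble \<mu> \<xi> (\<xi> + \<mu> *\<^sub>R y) = \<mu> powr (- (real DIM('a) - 2) / 2) * bubble 1 0 y"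
proof -
  define k where "k = (real DIM('a) - 2) / 2"
  have "(\<mu>\<^sup>2 + (norm (\<xi> + \<mu> *\<^sub>R y - \<xi>))\<^sup>2) powr (- k) = (\<mu>\<^sup>2) powr (- k) * (1 + (norm y)\<^sup>2) powr (- k)"
    using assms by (simp add: power_mult_distrib algebra_simps powr_mult[symmetric] add_pos_nonneg)
  also have "(\<mu>\<^sup>2) powr (- k) = \<mu> powr (- 2 * k)"
    using assms by (simp add: power2_powr)
  finally have "bubble \<mu> \<xi> (\<xi> + \<mu> *\<^sub>R y)
      = kappaN DIM('a) * (\<mu> powr k * \<mu> powr (- 2 * k)) * (1 + (norm y)\<^sup>2) powr (- k)"
    by (simp only: bubble_eq[where 'a = 'a, folded k_def] mult.assoc)
  also have "\<mu> powr k * \<mu> powr (- 2 * k) = \<mu> powr (- k)"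
    by (simp add: powr_add[symmetric])
  finally have "bubble \<mu> \<xi> (\<xi> + \<mu> *\<^sub>R y) = \<mu> powr (- k) * bubble 1 0 y"
    by (simp add: bubble_eq[where 'a = 'a, folded k_def])
  moreover have "- (real DIM('a) - 2) / 2 = - k"
    by (simp add: k_def field_simps)
  ultimately show ?thesis
    by simp
qed

lemma nn_integral_bubble_critical_invariant:
  fixes \<xi> :: "'a::euclidean_space"
  defines "e \<equiv> 2 * real DIM('a) / (real DIM('a) - 2)"
  assumes "DIM('a) > 2" and "\<mu> > 0"
  shows "(\<integral>\<^sup>+x. ennreal (bubble \<mu> \<xi> x powr e) \<partial>lborel) = (\<integral>\<^sup>+(y::'a). ennreal (bubble 1 0 y powr e) \<partial>lborel)"
proof -
  define n where "n = real DIM('a)"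
  have rescale: "bubble \<mu> \<xi> (\<xi> + \<mu> *\<^sub>R y) powr e = \<mu> powr (- n) * bubble 1 0 y powr e" for y :: 'a
  proof -
    have "bubble \<mu> \<xi> (\<xi> + \<mu> *\<^sub>R y) powr e = (\<mu> powr (- (n - 2) / 2) * bubble 1 0 y) powr e"
      using assms(3) by (simp add: bubble_rescale n_def)
    also have "\<dots> = \<mu> powr (- (n - 2) / 2 * e) * bubble 1 0 y powr e"
      by (simp add: powr_mult bubble_nonneg powr_powr)
    also have "- (n - 2) / 2 * e = - n"
      using assms(2) by (simp add: e_def n_def field_simps)
    finally show ?thesis .
  qed
  have "(\<integral>\<^sup>+x. ennreal (bubble \<mu> \<xi> x powr e) \<partial>lborel)
      = ennreal (\<mu> ^ DIM('a)) * (\<integral>\<^sup>+y. ennreal (bubble \<mu> \<xi> (\<xi> + \<mu> *\<^sub>R y) powr e) \<partial>lborel)"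
    using assms(3) by (intro nn_integral_lborel_affine) auto
  also have "\<dots> = ennreal (\<mu> ^ DIM('a)) * (\<integral>\<^sup>+(y::'a). ennreal (\<mu> powr (- n) * bubble 1 0 y powr e) \<partial>lborel)"
    by (simp add: rescale)
  also have "\<dots> = ennreal (\<mu> ^ DIM('a) * \<mu> powr (- n)) * (\<integral>\<^sup>+(y::'a). ennreal (bubble 1 0 y powr e) \<partial>lborel)"
    using assms(3) by (simp add: ennreal_mult nn_integral_cmult mult.assoc)
  also have "\<mu> ^ DIM('a) * \<mu> powr (- n) = 1"
    using assms(3) by (simp add: n_def powr_minus powr_realpow)
  finally show ?thesis
    by simp
qed

lemma nn_integral_bubble_critical_finite:
  defines "e \<equiv> 2 * real DIM('a) / (real DIM('a) - 2)"
  assumes "DIM('a::euclidean_space) > 2"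
  shows "(\<integral>\<^sup>+(y::'a). ennreal (bubble 1 0 y powr e) \<partial>lborel) < \<infinity>"
proof -
  have "bubble 1 0 y powr e = kappaN DIM('a) powr e * inverse ((1 + (norm y)\<^sup>2) ^ DIM('a))" for y :: 'a
  proof -
    have "- (real DIM('a) - 2) / 2 * e = - real DIM('a)"
      using assms(2) by (simp add: e_def field_simps)
    then show ?thesis
      by (simp add: bubble_def powr_mult powr_powr powr_minus powr_realpow add_pos_nonneg)
  qed
  then have "(\<integral>\<^sup>+(y::'a). ennreal (bubble 1 0 y powr e) \<partial>lborel)
      = ennreal (kappaN DIM('a) powr e) * (\<integral>\<^sup>+(y::'a). ennreal (inverse ((1 + (norm y)\<^sup>2) ^ DIM('a))) \<partial>lborel)"
    by (simp add: ennreal_mult nn_integral_cmult)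
  also have "\<dots> < \<infinity>"
    using nn_integral_inverse_one_plus_norm_sq_power_finite[where 'a = 'a] by (simp add: ennreal_mult_less_top)
  finally show ?thesis .
qed

lemma bubble_le:
  fixes \<xi> x :: "'a::euclidean_space"
  assumes "DIM('a) \<ge> 2" and "\<mu> > 0"
  shows "bubble \<mu> \<xi> x \<le> kappaN DIM('a) * ((\<mu> + norm (x - \<xi>)) / 2) powr (- (real DIM('a) - 2) / 2)"
proof -
  define k where "k = (real DIM('a) - 2) / 2"
  define r where "r = sqrt (\<mu>\<^sup>2 + (norm (x - \<xi>))\<^sup>2)"
  have "k \<ge> 0"
    using assms(1) by (simp add: k_def)
  have "\<mu> \<le> r"
    using assms(2) by (simp add: r_def real_le_rsqrt)
  have "(\<mu> + norm (x - \<xi>))\<^sup>2 \<le> 2 * (\<mu>\<^sup>2 + (norm (x - \<xi>))\<^sup>2)"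
    using zero_le_power2[of "\<mu> - norm (x - \<xi>)"] by (simp add: power2_eq_square algebra_simps)
  then have "(\<mu> + norm (x - \<xi>)) / 2 \<le> r"
    unfolding r_def by (intro real_le_rsqrt)
      (simp add: power_divide, use zero_le_power2[of \<mu>] zero_le_power2[of "norm (x - \<xi>)"] in linarith)
  have "r > 0"
    unfolding r_def using assms(2) by (intro real_sqrt_gt_zero add_pos_nonneg) auto
  have "r\<^sup>2 = \<mu>\<^sup>2 + (norm (x - \<xi>))\<^sup>2"
    unfolding r_def by (rule real_sqrt_pow2) simp
  then have "bubble \<mu> \<xi> x = kappaN DIM('a) * \<mu> powr k * (r\<^sup>2) powr (- k)"
    unfolding k_def by (simp only: bubble_eq)
  also have "\<dots> = kappaN DIM('a) * \<mu> powr k * r powr (- 2 * k)"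
    using \<open>r > 0\<close> by (simp add: power2_powr)
  also have "\<dots> \<le> kappaN DIM('a) * r powr k * r powr (- 2 * k)"
    using \<open>k \<ge> 0\<close> \<open>\<mu> \<le> r\<close> assms(2)
    by (intro mult_right_mono mult_left_mono powr_mono2) (simp_all add: kappaN_def)
  also have "\<dots> = kappaN DIM('a) * r powr (- k)"
    by (simp add: mult.assoc powr_add[symmetric])
  also have "\<dots> \<le> kappaN DIM('a) * ((\<mu> + norm (x - \<xi>)) / 2) powr (- k)"
    using \<open>k \<ge> 0\<close> \<open>(\<mu> + norm (x - \<xi>)) / 2 \<le> r\<close> assms(2)
    by (intro mult_left_mono powr_mono2') (simp_all add: kappaN_def add_pos_nonneg)
  finally show ?thesis
    by (simp add: k_def minus_divide_left)
qed

lemma bubble_sq_le_on_cball: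
  fixes \<xi> x :: "'a::euclidean_space"
  assumes "DIM('a) \<ge> 2" and "\<mu> > 0" and "d > 0" and "x \<in> cball 0 \<rho>" and "\<rho> + 2 * d \<le> \<mu> + norm \<xi>"
  shows "(bubble \<mu> \<xi> x)\<^sup>2 \<le> (kappaN DIM('a))\<^sup>2 * d powr (- (real DIM('a) - 2))"
proof -
  define k where "k = (real DIM('a) - 2) / 2"
  have "norm \<xi> - norm x \<le> norm (x - \<xi>)"
    by (metis norm_minus_commute norm_triangle_ineq2)
  then have "d \<le> (\<mu> + norm (x - \<xi>)) / 2"
    using assms(4,5) by simp
  have "bubble \<mu> \<xi> x \<le> kappaN DIM('a) * ((\<mu> + norm (x - \<xi>)) / 2) powr (- k)"
    using bubble_le[OF assms(1,2)] by (simp add: k_def minus_divide_left)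
  also have "\<dots> \<le> kappaN DIM('a) * d powr (- k)"
    using assms(1,3) \<open>d \<le> (\<mu> + norm (x - \<xi>)) / 2\<close>
    by (intro mult_left_mono powr_mono2') (auto simp: k_def kappaN_def)
  finally have "(bubble \<mu> \<xi> x)\<^sup>2 \<le> (kappaN DIM('a) * d powr (- k))\<^sup>2"
    by (intro power_mono bubble_nonneg)
  also have "\<dots> = (kappaN DIM('a))\<^sup>2 * d powr (- 2 * k)"
    using assms(3) by (simp add: power_mult_distrib powr_power)
  also have "- 2 * k = - (real DIM('a) - 2)"
    by (simp add: k_def)
  finally show ?thesis .
qed

lemma potential_bubble_sq_le:
  fixes \<xi> x :: "'a::euclidean_space"
  defines "n \<equiv> real DIM('a)"
  assumes "DIM('a) > 2" and "\<bar>v\<bar> \<le> M" and "\<mu> > 0" and "t > 0" and "d > 0" and "\<rho> + 2 * d \<le> \<mu> + norm \<xi>"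
  shows "ennreal (\<bar>v\<bar> * (bubble \<mu> \<xi> x)\<^sup>2)
    \<le> ennreal (M * (kappaN DIM('a))\<^sup>2 * d powr (- (n - 2))) * indicator (cball 0 \<rho>) x
      + ennreal (t powr (n / 2)) * (ennreal (\<bar>v\<bar> powr (n / 2)) * indicator (- cball 0 \<rho>) x)
      + ennreal (t powr (- (n / (n - 2)))) * ennreal (bubble \<mu> \<xi> x powr (2 * n / (n - 2)))"
proof (cases "x \<in> cball 0 \<rho>")
  case True
  then have "(bubble \<mu> \<xi> x)\<^sup>2 \<le> (kappaN DIM('a))\<^sup>2 * d powr (- (n - 2))"
    unfolding n_def using assms by (intro bubble_sq_le_on_cball) auto
  then have "\<bar>v\<bar> * (bubble \<mu> \<xi> x)\<^sup>2 \<le> M * (kappaN DIM('a))\<^sup>2 * d powr (- (n - 2))"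
    using assms(3) by (simp add: mult.assoc mult_mono)
  then show ?thesis
    using True by (simp add: ennreal_leI add_increasing2)
next
  case False
  define p q where "p = n / 2" and "q = n / (n - 2)"
  have "n > 2"
    using assms(2) by (simp add: n_def)
  then have "p > 1" and "q > 1" and "1 / p + 1 / q = 1"
    by (auto simp: p_def q_def field_simps)
  then have "\<bar>v\<bar> * (bubble \<mu> \<xi> x)\<^sup>2 \<le> t powr p * \<bar>v\<bar> powr p + t powr (- q) * ((bubble \<mu> \<xi> x)\<^sup>2) powr q"
    using assms(5) by (intro Youngs_inequality_scaled) auto
  also have "((bubble \<mu> \<xi> x)\<^sup>2) powr q = bubble \<mu> \<xi> x powr (2 * n / (n - 2))"
    by (simp add: power2_powr bubble_nonneg q_def)
  finally show ?thesis
    using False by (simp add: p_def q_def ennreal_plus[symmetric] ennreal_mult[symmetric] ennreal_leI del: ennreal_plus)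
qed

lemma nn_integral_potential_bubble_sq_le:
  fixes V :: "'a::euclidean_space \<Rightarrow> real" and \<xi> :: 'a
  defines "n \<equiv> real DIM('a)"
  assumes "DIM('a) > 2" and [measurable]: "V \<in> borel_measurable borel" and "\<And>x. \<bar>V x\<bar> \<le> M"
    and "\<mu> > 0" and "t > 0" and "d > 0" and "\<rho> + 2 * d \<le> \<mu> + norm \<xi>"
  shows "(\<integral>\<^sup>+x. ennreal (\<bar>V x\<bar> * (bubble \<mu> \<xi> x)\<^sup>2) \<partial>lborel)
    \<le> emeasure lborel (cball (0::'a) \<rho>) * ennreal (M * (kappaN DIM('a))\<^sup>2 * d powr (- (n - 2)))
      + ennreal (t powr (n / 2)) * (\<integral>\<^sup>+x. ennreal (\<bar>V x\<bar> powr (n / 2)) * indicator (- cball (0::'a) \<rho>) x \<partial>lborel)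
      + (\<integral>\<^sup>+(y::'a). ennreal (bubble 1 0 y powr (2 * n / (n - 2))) \<partial>lborel) * ennreal (t powr (- (n / (n - 2))))"
proof -
  define f1 f2 f3 :: "'a \<Rightarrow> ennreal" where
    "f1 x = ennreal (M * (kappaN DIM('a))\<^sup>2 * d powr (- (n - 2))) * indicator (cball 0 \<rho>) x" and
    "f2 x = ennreal (t powr (n / 2)) * (ennreal (\<bar>V x\<bar> powr (n / 2)) * indicator (- cball 0 \<rho>) x)" and
    "f3 x = ennreal (t powr (- (n / (n - 2)))) * ennreal (bubble \<mu> \<xi> x powr (2 * n / (n - 2)))" for x
  have [measurable]: "cball (0::'a) \<rho> \<in> sets borel"
    by simp
  have [measurable]: "f1 \<in> borel_measurable lborel" "f2 \<in> borel_measurable lborel" "f3 \<in> borel_measurable lborel"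
    unfolding f1_def f2_def f3_def by measurable
  have "(\<integral>\<^sup>+x. ennreal (\<bar>V x\<bar> * (bubble \<mu> \<xi> x)\<^sup>2) \<partial>lborel) \<le> (\<integral>\<^sup>+x. f1 x + f2 x + f3 x \<partial>lborel)"
    unfolding f1_def f2_def f3_def n_def using assms
    by (intro nn_integral_mono potential_bubble_sq_le) auto
  also have "\<dots> = (\<integral>\<^sup>+x. f1 x + f2 x \<partial>lborel) + (\<integral>\<^sup>+x. f3 x \<partial>lborel)"
    by (rule nn_integral_add) measurable
  also have "(\<integral>\<^sup>+x. f1 x + f2 x \<partial>lborel) = (\<integral>\<^sup>+x. f1 x \<partial>lborel) + (\<integral>\<^sup>+x. f2 x \<partial>lborel)"
    by (rule nn_integral_add) measurable
  also have "(\<integral>\<^sup>+x. f1 x \<partial>lborel)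
      = ennreal (M * (kappaN DIM('a))\<^sup>2 * d powr (- (n - 2))) * emeasure lborel (cball (0::'a) \<rho>)"
    unfolding f1_def by (rule nn_integral_cmult_indicator) simp
  also have "(\<integral>\<^sup>+x. f2 x \<partial>lborel)
      = ennreal (t powr (n / 2)) * (\<integral>\<^sup>+x. ennreal (\<bar>V x\<bar> powr (n / 2)) * indicator (- cball (0::'a) \<rho>) x \<partial>lborel)"
    unfolding f2_def by (rule nn_integral_cmult) measurable
  also have "(\<integral>\<^sup>+x. f3 x \<partial>lborel)
      = ennreal (t powr (- (n / (n - 2)))) * (\<integral>\<^sup>+x. ennreal (bubble \<mu> \<xi> x powr (2 * n / (n - 2))) \<partial>lborel)"
    unfolding f3_def by (rule nn_integral_cmult) measurable
  also have "(\<integral>\<^sup>+x. ennreal (bubble \<mu> \<xi> x powr (2 * n / (n - 2))) \<partial>lborel)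
      = (\<integral>\<^sup>+(y::'a). ennreal (bubble 1 0 y powr (2 * n / (n - 2))) \<partial>lborel)"
    unfolding n_def using assms(2,5) by (rule nn_integral_bubble_critical_invariant)
  finally show ?thesis
    by (simp add: mult.commute)
qed

lemma nn_integral_potential_bubble_sq_vanishes:
  fixes V :: "'a::euclidean_space \<Rightarrow> real"
  assumes "DIM('a) > 2" and "V \<in> borel_measurable borel" and "\<And>x. \<bar>V x\<bar> \<le> M"
    and "integrable lborel (\<lambda>x. \<bar>V x\<bar> powr (real DIM('a) / 2))" and "\<epsilon> > 0"
  shows "\<exists>R. \<forall>\<mu>>0. \<forall>\<xi>. R < \<mu> + norm \<xi> \<longrightarrow>
           (\<integral>\<^sup>+x. ennreal (\<bar>V x\<bar> * (bubble \<mu> \<xi> x)\<^sup>2) \<partial>lborel) < ennreal \<epsilon>"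
proof -
  define n where "n = real DIM('a)"
  define C where "C = (\<integral>\<^sup>+(y::'a). ennreal (bubble 1 0 y powr (2 * n / (n - 2))) \<partial>lborel)"
  define T where "T i = (\<integral>\<^sup>+x. ennreal (\<bar>V x\<bar> powr (n / 2)) * indicator (- cball (0::'a) (real i)) x \<partial>lborel)"
    for i :: nat
  have "C < \<infinity>"
    unfolding C_def n_def using assms(1) by (rule nn_integral_bubble_critical_finite)
  then obtain t where "t > 0" and t: "C * ennreal (t powr (- (n / (n - 2)))) < ennreal (\<epsilon> / 3)"
    using ex_pos_mult_ennreal_powr_less[of "n / (n - 2)" C "ennreal (\<epsilon> / 3)" 1] assms(1,5)
    by (auto simp: n_def)
  have "T \<longlonglongrightarrow> 0"
    unfolding T_def n_def using assms(2,4) integrableD(2)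
    by (intro nn_integral_outside_cball_tendsto_zero) (auto simp: less_top)
  then have "\<forall>\<^sub>F i in sequentially. ennreal (t powr (n / 2)) * T i < ennreal (\<epsilon> / 3)"
    using assms(5) by (intro eventually_mult_less_of_tendsto_zero) auto
  then obtain i where i: "ennreal (t powr (n / 2)) * T i < ennreal (\<epsilon> / 3)"
    using eventually_happens'[OF sequentially_bot] by blast
  obtain d where "d > 0" and d: "emeasure lborel (cball (0::'a) (real i))
      * ennreal (M * (kappaN DIM('a))\<^sup>2 * d powr (- (n - 2))) < ennreal (\<epsilon> / 3)"
    using ex_pos_mult_ennreal_powr_less[of "n - 2" "emeasure lborel (cball (0::'a) (real i))"
        "ennreal (\<epsilon> / 3)" "M * (kappaN DIM('a))\<^sup>2"] emeasure_lborel_cball_finite assms(1,5)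
    by (auto simp: n_def)
  show ?thesis
  proof (intro exI[of _ "real i + 2 * d"] allI impI)
    fix \<mu> :: real and \<xi> :: 'a
    assume "\<mu> > 0" and "real i + 2 * d < \<mu> + norm \<xi>"
    then have "(\<integral>\<^sup>+x. ennreal (\<bar>V x\<bar> * (bubble \<mu> \<xi> x)\<^sup>2) \<partial>lborel)
        \<le> emeasure lborel (cball (0::'a) (real i)) * ennreal (M * (kappaN DIM('a))\<^sup>2 * d powr (- (n - 2)))
          + ennreal (t powr (n / 2)) * T i + C * ennreal (t powr (- (n / (n - 2))))"
      unfolding C_def T_def n_def using assms(1-3) \<open>t > 0\<close> \<open>d > 0\<close>
      by (intro nn_integral_potential_bubble_sq_le) auto
    also have "\<dots> < ennreal (\<epsilon> / 3 + \<epsilon> / 3 + \<epsilon> / 3)"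
      using d i t by (intro add_mono_ennreal)
    finally show "(\<integral>\<^sup>+x. ennreal (\<bar>V x\<bar> * (bubble \<mu> \<xi> x)\<^sup>2) \<partial>lborel) < ennreal \<epsilon>"
      by simp
  qed
qed

theorem mainTheorem11:
  fixes V :: "'a::euclidean_space \<Rightarrow> real" and s :: real
  assumes "DIM('a) > 4"
    and "continuous_on UNIV V"
    and "\<exists>M. \<forall>x. \<bar>V x\<bar> \<le> M"
    and "1 < s" and "s < real DIM('a) / 2"
    and "integrable lborel (\<lambda>x. \<bar>V x\<bar> powr s)"
  shows "\<forall>\<epsilon>>0. \<exists>R. \<forall>\<mu>>0. \<forall>\<xi>::'a. \<mu> + norm \<xi> > R \<longrightarrow>
           \<bar>integral\<^sup>L lborel (\<lambda>x. V x * (bubble \<mu> \<xi> x)\<^sup>2)\<bar> < \<epsilon>"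
proof (intro allI impI)
  fix \<epsilon> :: real
  assume "\<epsilon> > 0"
  have [measurable]: "V \<in> borel_measurable borel"
    using assms(2) by (rule borel_measurable_continuous_onI)
  obtain M where M: "\<And>x. \<bar>V x\<bar> \<le> M"
    using assms(3) by blast
  have "integrable lborel (\<lambda>x. \<bar>V x\<bar> powr (real DIM('a) / 2))"
    by (rule integrable_abs_powr_of_bounded[OF assms(6) _ M]) (measurable, use assms(4,5) in auto)
  then obtain R where R: "\<And>\<mu> \<xi>. \<mu> > 0 \<Longrightarrow> R < \<mu> + norm \<xi> \<Longrightarrow>
      (\<integral>\<^sup>+x. ennreal (\<bar>V x\<bar> * (bubble \<mu> \<xi> x)\<^sup>2) \<partial>lborel) < ennreal \<epsilon>"
    using nn_integral_potential_bubble_sq_vanishes[of V M \<epsilon>] assms(1) M \<open>\<epsilon> > 0\<close> by auto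
  show "\<exists>R. \<forall>\<mu>>0. \<forall>\<xi>::'a. \<mu> + norm \<xi> > R \<longrightarrow> \<bar>integral\<^sup>L lborel (\<lambda>x. V x * (bubble \<mu> \<xi> x)\<^sup>2)\<bar> < \<epsilon>"
  proof (intro exI[of _ R] allI impI)
    fix \<mu> :: real and \<xi> :: 'a
    assume "\<mu> > 0" and "R < \<mu> + norm \<xi>"
    have "ennreal \<bar>integral\<^sup>L lborel (\<lambda>x. V x * (bubble \<mu> \<xi> x)\<^sup>2)\<bar>
        \<le> (\<integral>\<^sup>+x. ennreal (\<bar>V x\<bar> * (bubble \<mu> \<xi> x)\<^sup>2) \<partial>lborel)"
      using abs_integral_le_nn_integral_abs[of lborel "\<lambda>x. V x * (bubble \<mu> \<xi> x)\<^sup>2"] by (simp add: abs_mult)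
    also have "\<dots> < ennreal \<epsilon>"
      using R \<open>\<mu> > 0\<close> \<open>R < \<mu> + norm \<xi>\<close> .
    finally show "\<bar>integral\<^sup>L lborel (\<lambda>x. V x * (bubble \<mu> \<xi> x)\<^sup>2)\<bar> < \<epsilon>"
      by (simp add: ennreal_less_iff)
  qed
qed

end
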